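(* Let $\pi>0$ and let $A:[0,D]\to[0,\infty)$ be differentiable with $A'(Q)<0$ for all $Q\in[0,D]$. For a user type $(\beta,\theta)$ with $\beta\in[0,1]$, $\theta>0$, define the willingness-to-pay $\sigma(Q,\beta,\theta)=-[\theta\beta+\pi(1-\beta)]A'(Q)$. Then for any two user types $(\beta,\theta)$, $(\beta',\theta')$ and any $Q,Q'\in[0,D]$, $$\sigma(Q,\beta,\theta)<\sigma(Q,\beta',\theta')\iff\sigma(Q',\beta,\theta)<\sigma(Q',\beta',\theta').$$ Consequently, if the finitely many user types $\{(\beta_m,\theta_k)\}$ are listed as $\Lambda_1(Q),\dots,\Lambda_{KM}(Q)$ in ascending order of $\sigma(Q,\cdot)$, the same list is in ascending order of $\sigma(Q',\cdot)$ for every other $Q'\in[0,D]$, i.e. the ordering does not depend on the data cap.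
   Context: Model: a mobile operator charges an overage price $\pi>0$ per unit of data beyond the data cap. $A(Q)$ denotes a subscriber's expected overage data consumption under data cap $Q\in[0,D]$; the paper takes $A$ to be decreasing and convex. A user type is a pair $(\beta,\theta)$: $\theta>0$ is the user's valuation of one unit of data and $\beta\in[0,1]$ his network substitutability. There are $K$ valuations $0<\theta_1<\dots<\theta_K$ and $M$ substitutabilities $0\le\beta_1<\dots<\beta_M\le1$, giving $KM$ user types. *)

theory Defs
  imports Complex_Main
begin

text \<open>Willingness-to-pay of user type (beta, theta) under data cap Q, where A' is the
  derivative of the expected overage function A and price the overage price:
  sigma(Q,beta,theta) = -(theta*beta + price*(1-beta)) * A'(Q).\<close>
definition wtp :: "real \<Rightarrow> (real \<Rightarrow> real) \<Rightarrow> real \<Rightarrow> real \<Rightarrow> real \<Rightarrow> real" where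
  "wtp price A' Q beta theta = - (theta * beta + price * (1 - beta)) * A' Q"

end

theory Submission
  imports Defs
begin

text \<open>The willingness-to-pay factors as the type weight theta*beta + price*(1-beta) times the
  positive number -A'(Q); comparing two types at a fixed cap therefore only compares their
  weights, which do not involve Q.\<close>

definition type_weight :: "real \<Rightarrow> real \<Rightarrow> real \<Rightarrow> real" where
  "type_weight price beta theta = theta * beta + price * (1 - beta)"

lemma wtp_eq_type_weight: "wtp price A' Q beta theta = type_weight price beta theta * - A' Q"
  unfolding wtp_def type_weight_def by (simp add: algebra_simps)

lemma wtp_less_wtp_iff:
  assumes "A' Q < 0"
  shows "wtp price A' Q b t < wtp price A' Q b' t' \<longleftrightarrow>
         type_weight price b t < type_weight price b' t'"
  using assms by (simp add: wtp_eq_type_weight mult_less_cancel_right)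

lemma wtp_le_wtp_iff:
  assumes "A' Q < 0"
  shows "wtp price A' Q b t \<le> wtp price A' Q b' t' \<longleftrightarrow>
         type_weight price b t \<le> type_weight price b' t'"
  using assms by (simp add: wtp_eq_type_weight mult_le_cancel_right)

lemma wtp_order_eq:
  assumes "A' Q < 0" and "A' Q' < 0"
  shows "(\<lambda>(b1, t1) (b2, t2). wtp price A' Q b1 t1 \<le> wtp price A' Q b2 t2)
       = (\<lambda>(b1, t1) (b2, t2). wtp price A' Q' b1 t1 \<le> wtp price A' Q' b2 t2)"
  using assms by (intro ext) (auto simp: wtp_le_wtp_iff)

theorem lemma1:
  fixes price D :: real and A A' :: "real \<Rightarrow> real"
  assumes pi_pos: "price > 0"
    and A_nonneg: "\<And>Q. Q \<in> {0..D} \<Longrightarrow> A Q \<ge> 0"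
    and A_deriv: "\<And>Q. Q \<in> {0..D} \<Longrightarrow> (A has_real_derivative A' Q) (at Q within {0..D})"
    and A'_neg: "\<And>Q. Q \<in> {0..D} \<Longrightarrow> A' Q < 0"
  shows "(\<forall>beta theta beta' theta' Q Q'.
            beta \<in> {0..1} \<and> theta > 0 \<and> beta' \<in> {0..1} \<and> theta' > 0 \<and>
            Q \<in> {0..D} \<and> Q' \<in> {0..D} \<longrightarrow>
            (wtp price A' Q beta theta < wtp price A' Q beta' theta' \<longleftrightarrow>
             wtp price A' Q' beta theta < wtp price A' Q' beta' theta'))
       \<and> (\<forall>(types :: (real \<times> real) list) Q Q'.
            (\<forall>(beta, theta) \<in> set types. beta \<in> {0..1} \<and> theta > 0) \<and>
            Q \<in> {0..D} \<and> Q' \<in> {0..D} \<and>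
            sorted_wrt (\<lambda>(b1, t1) (b2, t2). wtp price A' Q b1 t1 \<le> wtp price A' Q b2 t2) types
            \<longrightarrow> sorted_wrt (\<lambda>(b1, t1) (b2, t2). wtp price A' Q' b1 t1 \<le> wtp price A' Q' b2 t2) types)"
proof (intro conjI allI impI)
  fix beta theta beta' theta' Q Q' :: real
  assume "beta \<in> {0..1} \<and> theta > 0 \<and> beta' \<in> {0..1} \<and> theta' > 0 \<and>
          Q \<in> {0..D} \<and> Q' \<in> {0..D}"
  then have "A' Q < 0" "A' Q' < 0" using A'_neg by auto
  then show "wtp price A' Q beta theta < wtp price A' Q beta' theta' \<longleftrightarrow>
             wtp price A' Q' beta theta < wtp price A' Q' beta' theta'"
    by (simp add: wtp_less_wtp_iff)
next
  fix types :: "(real \<times> real) list" and Q Q' :: real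
  assume h: "(\<forall>(beta, theta) \<in> set types. beta \<in> {0..1} \<and> theta > 0) \<and>
             Q \<in> {0..D} \<and> Q' \<in> {0..D} \<and>
             sorted_wrt (\<lambda>(b1, t1) (b2, t2). wtp price A' Q b1 t1 \<le> wtp price A' Q b2 t2) types"
  then have "A' Q < 0" "A' Q' < 0" using A'_neg by auto
  with h show "sorted_wrt (\<lambda>(b1, t1) (b2, t2). wtp price A' Q' b1 t1 \<le> wtp price A' Q' b2 t2) types"
    using wtp_order_eq by metis
qed

end
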